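(* Let $m\ge1$ and $1\le l\le m$. For $j\in\{l,\dots,m\}$ let $S_j=\{1,\dots,l-1\}\cup\{j\}$, and let $\mathcal R=\{S_l,\dots,S_m\}$. Define the CSS code on $n=2^m$ qubits by taking $H_X$ with $\mathrm{rs}(H_X)=\mathrm{RM}(l-1,m)$ and $H_Z$ with $\mathrm{rs}(H_Z)=\mathrm{RM}(m-l-1,m)+\mathrm{span}\{\mathrm{ev}(\hat x_S): S\subseteq[m],\ |S|=l,\ S\notin\mathcal R\}$. Then $H_XH_Z^T=0$, the code has parameters $[[2^m,\ m-l+1,\ \min(2^{m-l},2^l)]]$, and it is phantom (a CSS logical basis is given by $L_X$ with rows $\mathrm{ev}(x_{S_l}),\dots,\mathrm{ev}(x_{S_m})$ and $L_Z$ with rows $\mathrm{ev}(\hat x_{S_l}),\dots,\mathrm{ev}(\hat x_{S_m})$).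
   Context: Reed–Muller conventions: identify the $2^m$ coordinates with $\mathbb F_2^m$. For a Boolean polynomial $f\in\mathbb F_2[x_1,\dots,x_m]/(x_1^2-x_1,\dots,x_m^2-x_m)$, its evaluation vector is $\mathrm{ev}(f)=(f(a))_{a\in\mathbb F_2^m}\in\mathbb F_2^{2^m}$. $\mathrm{RM}(r,m)$ is the span of the evaluation vectors of all monomials of degree at most $r$ ($\mathrm{RM}(r,m)=\{0\}$ if $r<0$). For $S\subseteq[m]$, $x_S=\prod_{i\in S}x_i$ and its negated complement is $\hat x_S=\prod_{i\in[m]\setminus S}(1+x_i)$. CSS conventions: a CSS code is specified by $H_X,H_Z$ over $\mathbb F_2$ with $H_XH_Z^T=0$; $k=n-\operatorname{rank}H_X-\operatorname{rank}H_Z$; $d_X=\min\{|v|:v\in\ker H_Z\setminus\mathrm{rs}(H_X)\}$, $d_Z=\min\{|v|:v\in\ker H_X\setminus\mathrm{rs}(H_Z)\}$, $d=\min(d_X,d_Z)$, where $\mathrm{rs}$ is row space and $\ker M=\{v:Mv^T=0\}$. A CSS logical basis is $L_X,L_Z\in\mathbb F_2^{k\times n}$ with rows of $L_X$ in $\ker H_Z$, rows of $L_Z$ in $\ker H_X$, $L_XL_Z^T=I_k$. A permutation with matrix $P$ implements the logical CNOT circuit $A\in GL(k,\mathbb F_2)$ if $\mathrm{rs}(H_XP)=\mathrm{rs}(H_X)$, $\mathrm{rs}(H_ZP)=\mathrm{rs}(H_Z)$, rows of $L_XP-AL_X$ lie in $\mathrm{rs}(H_X)$ and rows of $L_ZP-A^{-T}L_Z$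 lie in $\mathrm{rs}(H_Z)$. The code is phantom if some CSS logical basis admits, for every ordered pair $a\ne b$ in $[k]$, a permutation implementing $I_k+E_{ab}$ ($E_{ab}$ the matrix unit). *)

theory Defs
  imports Main "HOL-Combinatorics.Permutations"
begin

text \<open>Coordinates: a point a of F_2^m is identified with its support set
  (a subset of {1..m}).  A vector of F_2^(2^m) is a function from points to bool
  (bool = F_2), required to vanish outside the points.\<close>

type_synonym vec = "nat set \<Rightarrow> bool"

definition pts :: "nat \<Rightarrow> nat set set" where
  "pts m = Pow {1..m}"

definition isvec :: "nat \<Rightarrow> vec \<Rightarrow> bool" where
  "isvec m v \<longleftrightarrow> (\<forall>a. v a \<longrightarrow> a \<in> pts m)"

definition vzero :: vec where "vzero = (\<lambda>a. False)"

definition vadd :: "vec \<Rightarrow> vec \<Rightarrow> vec" where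
  "vadd u v = (\<lambda>a. u a \<noteq> v a)"

definition weight :: "vec \<Rightarrow> nat" where
  "weight v = card {a. v a}"

definition dot :: "nat \<Rightarrow> vec \<Rightarrow> vec \<Rightarrow> bool" where
  "dot m u v \<longleftrightarrow> odd (card {a \<in> pts m. u a \<and> v a})"

inductive_set vspan :: "vec set \<Rightarrow> vec set" for B :: "vec set" where
  zero: "vzero \<in> vspan B"
| add: "v \<in> B \<Longrightarrow> w \<in> vspan B \<Longrightarrow> vadd v w \<in> vspan B"

definition vdim :: "vec set \<Rightarrow> nat" where
  "vdim V = (LEAST d. \<exists>B. finite B \<and> card B = d \<and> B \<subseteq> V \<and> vspan B = V)"

definition ev_mono :: "nat \<Rightarrow> nat set \<Rightarrow> vec" where
  "ev_mono m S = (\<lambda>a. a \<in> pts m \<and> S \<subseteq> a)"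

definition ev_hat :: "nat \<Rightarrow> nat set \<Rightarrow> vec" where
  "ev_hat m S = (\<lambda>a. a \<in> pts m \<and> ({1..m} - S) \<inter> a = {})"

text \<open>Reed--Muller code RM(r,m); r is an integer, RM(r,m) = {0} for r < 0.\<close>
definition RM :: "int \<Rightarrow> nat \<Rightarrow> vec set" where
  "RM r m = vspan {ev_mono m S | S. S \<subseteq> {1..m} \<and> int (card S) \<le> r}"

text \<open>Matrices with n = 2^m columns are given as lists of rows.\<close>
definition rs :: "vec list \<Rightarrow> vec set" where
  "rs H = vspan (set H)"

definition rank :: "vec list \<Rightarrow> nat" where
  "rank H = vdim (rs H)"

definition kerM :: "nat \<Rightarrow> vec list \<Rightarrow> vec set" where
  "kerM m H = {v. isvec m v \<and> (\<forall>h \<in> set H. \<not> dot m h v)}"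

definition orth :: "nat \<Rightarrow> vec list \<Rightarrow> vec list \<Rightarrow> bool" where
  "orth m HX HZ \<longleftrightarrow> (\<forall>h \<in> set HX. \<forall>g \<in> set HZ. \<not> dot m h g)"

definition css_k :: "nat \<Rightarrow> vec list \<Rightarrow> vec list \<Rightarrow> int" where
  "css_k m HX HZ = int (2^m) - int (rank HX) - int (rank HZ)"

definition min_weight :: "vec set \<Rightarrow> nat" where
  "min_weight V = Inf (weight ` V)"

definition css_dX :: "nat \<Rightarrow> vec list \<Rightarrow> vec list \<Rightarrow> nat" where
  "css_dX m HX HZ = min_weight (kerM m HZ - rs HX)"

definition css_dZ :: "nat \<Rightarrow> vec list \<Rightarrow> vec list \<Rightarrow> nat" where
  "css_dZ m HX HZ = min_weight (kerM m HX - rs HZ)"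

definition css_d :: "nat \<Rightarrow> vec list \<Rightarrow> vec list \<Rightarrow> nat" where
  "css_d m HX HZ = min (css_dX m HX HZ) (css_dZ m HX HZ)"

text \<open>k x k matrices over F_2 are functions nat => nat => bool (indices 0..<k);
  k x n matrices are families of row vectors nat => vec.  (A L)_i = sum_j A_ij L_j.\<close>
definition mmul :: "nat \<Rightarrow> (nat \<Rightarrow> nat \<Rightarrow> bool) \<Rightarrow> (nat \<Rightarrow> vec) \<Rightarrow> nat \<Rightarrow> vec" where
  "mmul k A L i = (\<lambda>a. odd (card {j \<in> {..<k}. A i j \<and> L j a}))"

definition logical_basis ::
  "nat \<Rightarrow> vec list \<Rightarrow> vec list \<Rightarrow> nat \<Rightarrow> (nat \<Rightarrow> vec) \<Rightarrow> (nat \<Rightarrow> vec) \<Rightarrow> bool" where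
  "logical_basis m HX HZ k LX LZ \<longleftrightarrow>
     (\<forall>i<k. LX i \<in> kerM m HZ) \<and> (\<forall>i<k. LZ i \<in> kerM m HX) \<and>
     (\<forall>i<k. \<forall>j<k. dot m (LX i) (LZ j) = (i = j))"

text \<open>Action of the permutation matrix of sigma on a row vector (v P).\<close>
definition vperm :: "(nat set \<Rightarrow> nat set) \<Rightarrow> vec \<Rightarrow> vec" where
  "vperm \<sigma> v = v \<circ> \<sigma>"

text \<open>B is A^{-T} iff A B^T = I.\<close>
definition implements ::
  "nat \<Rightarrow> vec list \<Rightarrow> vec list \<Rightarrow> nat \<Rightarrow> (nat \<Rightarrow> vec) \<Rightarrow> (nat \<Rightarrow> vec)
   \<Rightarrow> (nat set \<Rightarrow> nat set) \<Rightarrow> (nat \<Rightarrow> nat \<Rightarrow> bool) \<Rightarrow> bool" where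
  "implements m HX HZ k LX LZ \<sigma> A \<longleftrightarrow>
     \<sigma> permutes pts m \<and>
     rs (map (vperm \<sigma>) HX) = rs HX \<and> rs (map (vperm \<sigma>) HZ) = rs HZ \<and>
     (\<exists>B. (\<forall>i<k. \<forall>j<k. odd (card {t \<in> {..<k}. A i t \<and> B j t}) = (i = j)) \<and>
          (\<forall>i<k. vadd (vperm \<sigma> (LX i)) (mmul k A LX i) \<in> rs HX) \<and>
          (\<forall>i<k. vadd (vperm \<sigma> (LZ i)) (mmul k B LZ i) \<in> rs HZ))"

definition transvection :: "nat \<Rightarrow> nat \<Rightarrow> nat \<Rightarrow> nat \<Rightarrow> bool" where
  "transvection a b = (\<lambda>i j. (i = j) \<noteq> (i = a \<and> j = b))"

definition phantom :: "nat \<Rightarrow> vec list \<Rightarrow> vec list \<Rightarrow> bool" where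
  "phantom m HX HZ \<longleftrightarrow>
     (\<exists>LX LZ. logical_basis m HX HZ (nat (css_k m HX HZ)) LX LZ \<and>
        (\<forall>a < nat (css_k m HX HZ). \<forall>b < nat (css_k m HX HZ). a \<noteq> b \<longrightarrow>
           (\<exists>\<sigma>. implements m HX HZ (nat (css_k m HX HZ)) LX LZ \<sigma> (transvection a b))))"

end

(* The monomials x_T and the negated complements hat x_S (T, S subsets of [m]) form dual
   bases of F_2^(2^m): <x_T, hat x_S> = [T = S].  Hence the span of a family of monomials has
   as orthogonal complement the span of the hats indexed by the remaining subsets, and its
   dimension is the size of the family.  Since hat x_S has degree m - |S|, H_X is spanned by
   the x_T with |T| < l and H_Z by the hat x_S with |S| >= l, S not in R; the subsets left over
   by both are exactly R, which gives k = |R| = m - l + 1 and the stated logical bases.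

   A nontrivial X-logical operator is a sum of monomials one of which, x_T with T in R, has
   the top degree l, and the Reed-Muller weight bound gives weight >= 2^(m-l); dually a
   Z-logical operator involves a hat of minimal size l, giving weight >= 2^l.  Both bounds
   are attained at S_l.  Finally, for p, q >= l the coordinate permutation induced by
   x_p -> x_p + x_q preserves both stabiliser spaces and sends x_(S_p) to x_(S_p) + x_(S_q):
   it implements the CNOT I + E_ab. *)

theory Submission
  imports Defs
begin

section \<open>Vectors over \<open>\<bbbF>\<^sub>2\<close> and their spans\<close>

lemma vadd_assoc: "vadd (vadd u v) w = vadd u (vadd v w)"
  unfolding vadd_def by auto

lemma vadd_self [simp]: "vadd v v = vzero"
  unfolding vadd_def vzero_def by auto

lemma vadd_zero [simp]: "vadd vzero v = v" "vadd v vzero = v"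
  unfolding vadd_def vzero_def by auto

lemma vadd_cancel_left [simp]: "vadd v (vadd v w) = w"
  unfolding vadd_def by auto

lemma vspan_base: "v \<in> B \<Longrightarrow> v \<in> vspan B"
  using vspan.add[OF _ vspan.zero] by simp

lemma vspan_vadd: "u \<in> vspan B \<Longrightarrow> w \<in> vspan B \<Longrightarrow> vadd u w \<in> vspan B"
  by (induction u rule: vspan.induct) (simp_all add: vadd_assoc vspan.add)

lemma vspan_subset_vspan: "A \<subseteq> vspan B \<Longrightarrow> vspan A \<subseteq> vspan B"
proof
  fix u assume "u \<in> vspan A" and "A \<subseteq> vspan B"
  then show "u \<in> vspan B"
    by (induction u rule: vspan.induct) (auto intro: vspan.zero vspan_vadd)
qed

lemma vspan_mono: "A \<subseteq> B \<Longrightarrow> vspan A \<subseteq> vspan B"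
  by (rule vspan_subset_vspan) (auto intro: vspan_base)

lemma vspan_Un_vspan: "vspan (vspan A \<union> C) = vspan (A \<union> C)"
proof
  show "vspan (vspan A \<union> C) \<subseteq> vspan (A \<union> C)"
    using vspan_mono[of A "A \<union> C"] by (intro vspan_subset_vspan) (auto intro: vspan_base)
qed (auto intro!: vspan_mono vspan_base)

lemma isvec_vspan:
  assumes "u \<in> vspan B" and "\<And>b. b \<in> B \<Longrightarrow> isvec m b"
  shows "isvec m u"
  using assms by (induction u rule: vspan.induct) (auto simp: isvec_def vadd_def vzero_def)

definition vsum :: "('i \<Rightarrow> vec) \<Rightarrow> 'i set \<Rightarrow> vec" where
  "vsum f G = (\<lambda>a. odd (card {T \<in> G. f T a}))"

lemma vsum_empty [simp]: "vsum f {} = vzero"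
  unfolding vsum_def vzero_def by simp

lemma vsum_insert:
  assumes "finite G" "T \<notin> G"
  shows "vsum f (insert T G) = vadd (f T) (vsum f G)"
proof
  fix a
  have "{T' \<in> insert T G. f T' a} = (if f T a then insert T {T' \<in> G. f T' a} else {T' \<in> G. f T' a})"
    by auto
  then show "vsum f (insert T G) a = vadd (f T) (vsum f G) a"
    unfolding vsum_def vadd_def using assms by auto
qed

lemma vsum_remove:
  assumes "finite G" "T \<in> G"
  shows "vsum f (G - {T}) = vadd (f T) (vsum f G)"
  using vsum_insert[of "G - {T}" T f] assms by (simp add: insert_absorb)

lemma vsum_cong: "(\<And>T. T \<in> G \<Longrightarrow> f T = f' T) \<Longrightarrow> vsum f G = vsum f' G"
  unfolding vsum_def by (metis (mono_tags, lifting) Collect_cong)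

lemma vsum_image: "inj_on h G \<Longrightarrow> vsum f (h ` G) = vsum (f \<circ> h) G"
proof
  fix a assume inj: "inj_on h G"
  have "{T \<in> h ` G. f T a} = h ` {S \<in> G. f (h S) a}" by auto
  moreover have "inj_on h {S \<in> G. f (h S) a}" using inj by (rule inj_on_subset) auto
  ultimately show "vsum f (h ` G) a = vsum (f \<circ> h) G a"
    unfolding vsum_def by (simp add: card_image)
qed

lemma vsum_comp_right: "vsum (\<lambda>T. f T \<circ> \<sigma>) G = vsum f G \<circ> \<sigma>"
  unfolding vsum_def by auto

lemma vsum_in_vspan: "finite G \<Longrightarrow> G \<subseteq> F \<Longrightarrow> vsum f G \<in> vspan (f ` F)"
  by (induction G rule: finite_induct) (simp_all add: vsum_insert vspan.zero vspan.add)

lemma vspan_imp_vsum: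
  assumes "finite B" "u \<in> vspan B"
  shows "\<exists>B' \<subseteq> B. u = vsum id B'"
  using assms(2)
proof (induction u rule: vspan.induct)
  case zero
  show ?case by (intro exI[of _ "{}"]) simp
next
  case (add v w)
  then obtain B' where B': "B' \<subseteq> B" "w = vsum id B'" by blast
  with assms(1) have "finite B'" by (blast intro: finite_subset)
  show ?case
  proof (cases "v \<in> B'")
    case True
    then have "vadd v w = vsum id (B' - {v})" using B' \<open>finite B'\<close> by (simp add: vsum_remove)
    with B' show ?thesis by blast
  next
    case False
    then have "vadd v w = vsum id (insert v B')" using B' \<open>finite B'\<close> by (simp add: vsum_insert)
    with B' add.hyps(1) show ?thesis by blast
  qed
qed

lemma card_vspan_le:
  assumes "finite B"
  shows "card (vspan B) \<le> 2 ^ card B"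
proof -
  have "vspan B \<subseteq> vsum id ` Pow B" using vspan_imp_vsum[OF assms] by blast
  then have "card (vspan B) \<le> card (vsum id ` Pow B)" using assms by (simp add: card_mono)
  also have "\<dots> \<le> card (Pow B)" by (rule card_image_le) (simp add: assms)
  finally show ?thesis by (simp add: card_Pow assms)
qed

lemma odd_card_swap:
  assumes "finite A" "finite B"
  shows "odd (card {x\<in>A. odd (card {y\<in>B. R x y})}) \<longleftrightarrow> odd (card {y\<in>B. odd (card {x\<in>A. R x y})})"
proof -
  have "(\<Sum>x\<in>A. card {y\<in>B. R x y}) = (\<Sum>x\<in>A. \<Sum>y\<in>B. if R x y then 1 else 0)"
    using assms(2) by (simp add: sum.If_cases Int_def)
  also have "\<dots> = (\<Sum>y\<in>B. \<Sum>x\<in>A. if R x y then 1 else 0)"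
    by (rule sum.swap)
  also have "\<dots> = (\<Sum>y\<in>B. card {x\<in>A. R x y})"
    using assms(1) by (simp add: sum.If_cases Int_def)
  finally show ?thesis
    using even_sum_iff[OF assms(1), of "\<lambda>x. card {y\<in>B. R x y}"]
      even_sum_iff[OF assms(2), of "\<lambda>y. card {x\<in>A. R x y}"] by simp
qed

lemma card_subset_interval:
  assumes "finite B" "A \<subseteq> B"
  shows "card {a. A \<subseteq> a \<and> a \<subseteq> B} = 2 ^ card (B - A)"
proof -
  have "{a. A \<subseteq> a \<and> a \<subseteq> B} = (\<lambda>c. A \<union> c) ` Pow (B - A)"
    using assms(2) by (auto intro!: image_eqI[of _ _ "_ - A"])
  moreover have "inj_on (\<lambda>c. A \<union> c) (Pow (B - A))" by (auto simp: inj_on_def)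
  ultimately show ?thesis using assms by (simp add: card_image card_Pow)
qed

lemma odd_card_subset_interval_iff:
  assumes "finite B"
  shows "odd (card {a. A \<subseteq> a \<and> a \<subseteq> B}) \<longleftrightarrow> A = B"
proof (cases "A \<subseteq> B")
  case True
  then show ?thesis using card_subset_interval[OF assms True] assms by auto
next
  case False
  then have empty: "{a. A \<subseteq> a \<and> a \<subseteq> B} = {}" by auto
  show ?thesis unfolding empty using False by auto
qed

lemma finite_pts [simp]: "finite (pts m)"
  unfolding pts_def by simp

lemma finite_subset_atLeastAtMost: "T \<subseteq> {a..(b::nat)} \<Longrightarrow> finite T"
  using finite_subset by blast

lemma finite_subset_Pow_atLeastAtMost: "F \<subseteq> Pow {a..(b::nat)} \<Longrightarrow> finite F"
  by (rule finite_subset[of _ "Pow {a..b}"]) auto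

lemma card_isvec: "card {v. isvec m v} = 2 ^ 2 ^ m"
proof -
  have "{v. isvec m v} = (\<lambda>A a. a \<in> A) ` Pow (pts m)"
  proof (intro equalityI subsetI)
    fix v assume "v \<in> {v. isvec m v}"
    then show "v \<in> (\<lambda>A a. a \<in> A) ` Pow (pts m)"
      unfolding isvec_def by (intro image_eqI[of _ _ "{a. v a}"]) auto
  qed (auto simp: isvec_def)
  moreover have "inj_on (\<lambda>A a. a \<in> A) (Pow (pts m))"
    by (rule inj_onI) (metis Collect_mem_eq)
  ultimately show ?thesis by (simp add: card_image card_Pow pts_def)
qed

lemma dot_commute: "dot m u v = dot m v u"
  unfolding dot_def by (simp add: conj_commute)

lemma odd_card_sym_diff:
  assumes "finite X" "finite Y"
  shows "odd (card (sym_diff X Y)) \<longleftrightarrow> odd (card X) \<noteq> odd (card Y)"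
proof -
  have "card (sym_diff X Y) = card (X - Y) + card (Y - X)"
    using assms by (intro card_Un_disjoint) auto
  moreover have "card X = card (X - Y) + card (X \<inter> Y)" "card Y = card (Y - X) + card (X \<inter> Y)"
    using assms by (simp_all add: card_Diff_subset_Int card_mono Int_commute)
  ultimately show ?thesis by presburger
qed

lemma dot_vadd_left: "dot m (vadd u w) v \<longleftrightarrow> dot m u v \<noteq> dot m w v"
proof -
  let ?A = "{a \<in> pts m. u a \<and> v a}" and ?B = "{a \<in> pts m. w a \<and> v a}"
  have "{a \<in> pts m. vadd u w a \<and> v a} = sym_diff ?A ?B"
    unfolding vadd_def by auto
  then show ?thesis
    unfolding dot_def using odd_card_sym_diff[of ?A ?B] by simp
qed

lemma dot_zero_left [simp]: "\<not> dot m vzero v"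
  unfolding dot_def vzero_def by simp

lemma dot_vspan_left:
  assumes "u \<in> vspan B" and "\<And>b. b \<in> B \<Longrightarrow> \<not> dot m b v"
  shows "\<not> dot m u v"
  using assms by (induction u rule: vspan.induct) (auto simp: dot_vadd_left)

lemma dot_vsum_left:
  assumes "finite G"
  shows "dot m (vsum f G) w \<longleftrightarrow> odd (card {T\<in>G. dot m (f T) w})"
proof -
  have "(odd (card {T\<in>G. f T a}) \<and> w a) \<longleftrightarrow> odd (card {T\<in>G. f T a \<and> w a})" for a
    by (cases "w a") simp_all
  then have "dot m (vsum f G) w \<longleftrightarrow> odd (card {a\<in>pts m. odd (card {T\<in>G. f T a \<and> w a})})"
    unfolding dot_def vsum_def by simp
  also have "\<dots> \<longleftrightarrow> odd (card {T\<in>G. odd (card {a\<in>pts m. f T a \<and> w a})})"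
    using assms by (intro odd_card_swap) simp_all
  finally show ?thesis unfolding dot_def .
qed

section \<open>The monomial and hat bases\<close>

lemma ev_mono_iff: "ev_mono m T a \<longleftrightarrow> a \<subseteq> {1..m} \<and> T \<subseteq> a"
  unfolding ev_mono_def pts_def by auto

lemma ev_hat_iff: "S \<subseteq> {1..m} \<Longrightarrow> ev_hat m S a \<longleftrightarrow> a \<subseteq> S"
  unfolding ev_hat_def pts_def by auto

lemma isvec_ev_mono [simp]: "isvec m (ev_mono m T)"
  unfolding isvec_def ev_mono_def by simp

lemma isvec_ev_hat [simp]: "isvec m (ev_hat m S)"
  unfolding isvec_def ev_hat_def by simp

lemma dot_ev_mono_ev_hat:
  assumes "T \<subseteq> {1..m}" "S \<subseteq> {1..m}"
  shows "dot m (ev_mono m T) (ev_hat m S) \<longleftrightarrow> T = S"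
proof -
  have "{a \<in> pts m. ev_mono m T a \<and> ev_hat m S a} = {a. T \<subseteq> a \<and> a \<subseteq> S}"
    using assms by (auto simp: ev_hat_iff ev_mono_iff pts_def)
  then show ?thesis
    unfolding dot_def using odd_card_subset_interval_iff[of S T] assms(2)
    by (simp add: finite_subset_atLeastAtMost)
qed

lemma dot_ev_hat_ev_hat:
  assumes "S \<subseteq> {1..m}" "T \<subseteq> {1..m}"
  shows "dot m (ev_hat m S) (ev_hat m T) \<longleftrightarrow> S \<inter> T = {}"
proof -
  have "{a \<in> pts m. ev_hat m S a \<and> ev_hat m T a} = {a. {} \<subseteq> a \<and> a \<subseteq> S \<inter> T}"
    using assms by (auto simp: ev_hat_iff pts_def)
  then show ?thesis
    unfolding dot_def using odd_card_subset_interval_iff[of "S \<inter> T" "{}"] assms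
    by (auto simp: finite_subset_atLeastAtMost)
qed

lemma dot_ev_mono_ev_mono:
  assumes "T \<subseteq> {1..m}" "S \<subseteq> {1..m}"
  shows "dot m (ev_mono m T) (ev_mono m S) \<longleftrightarrow> T \<union> S = {1..m}"
proof -
  have "{a \<in> pts m. ev_mono m T a \<and> ev_mono m S a} = {a. T \<union> S \<subseteq> a \<and> a \<subseteq> {1..m}}"
    using assms by (auto simp: ev_mono_iff pts_def)
  then show ?thesis unfolding dot_def using odd_card_subset_interval_iff[of "{1..m}" "T \<union> S"] by simp
qed

locale dual_bases =
  fixes m :: nat and f g :: "nat set \<Rightarrow> vec"
  assumes isvec_f: "isvec m (f T)"
    and dot_f_g: "T \<subseteq> {1..m} \<Longrightarrow> S \<subseteq> {1..m} \<Longrightarrow> dot m (f T) (g S) \<longleftrightarrow> T = S"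
begin

lemma dot_vsum_g:
  assumes "G \<subseteq> Pow {1..m}" "T \<subseteq> {1..m}"
  shows "dot m (vsum f G) (g T) \<longleftrightarrow> T \<in> G"
proof -
  have "{T' \<in> G. dot m (f T') (g T)} = (if T \<in> G then {T} else {})"
    using assms by (auto simp: dot_f_g)
  moreover have "finite G" using assms(1) by (rule finite_subset_Pow_atLeastAtMost)
  ultimately show ?thesis by (simp add: dot_vsum_left)
qed

lemma inj_on_vsum: "inj_on (vsum f) (Pow (Pow {1..m}))"
proof (rule inj_onI)
  fix G G' assume G: "G \<in> Pow (Pow {1..m})" "G' \<in> Pow (Pow {1..m})" "vsum f G = vsum f G'"
  have "T \<in> G \<longleftrightarrow> T \<in> G'" if "T \<subseteq> {1..m}" for T
  proof -
    have "T \<in> G \<longleftrightarrow> dot m (vsum f G) (g T)"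
      by (rule dot_vsum_g[symmetric]) (use G(1) that in auto)
    also have "\<dots> \<longleftrightarrow> T \<in> G'"
      unfolding G(3) by (rule dot_vsum_g) (use G(2) that in auto)
    finally show ?thesis .
  qed
  with G(1,2) show "G = G'" by auto
qed

text \<open>The \<open>2^(2^m)\<close> sums of subfamilies of \<open>f\<close> are distinct vectors, so they exhaust all
  vectors; the coefficients are then read off by pairing with \<open>g\<close>.\<close>
lemma vsum_coefficients:
  assumes "isvec m v"
  shows "v = vsum f {T. T \<subseteq> {1..m} \<and> dot m v (g T)}"
proof -
  have sums: "vsum f ` Pow (Pow {1..m}) \<subseteq> {v. isvec m v}"
  proof (rule image_subsetI)
    fix G assume "G \<in> Pow (Pow {1..m})"
    then have "vsum f G \<in> vspan (f ` Pow {1..m})"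
      by (intro vsum_in_vspan) (auto intro: finite_subset_Pow_atLeastAtMost)
    then have "isvec m (vsum f G)"
      by (rule isvec_vspan) (auto simp: isvec_f)
    then show "vsum f G \<in> {v. isvec m v}" by simp
  qed
  have "card (vsum f ` Pow (Pow {1..m})) = card (Pow (Pow {1..m}))"
    by (rule card_image[OF inj_on_vsum])
  also have "\<dots> = card {v. isvec m v}"
    by (simp add: card_Pow card_isvec)
  finally have "vsum f ` Pow (Pow {1..m}) = {v. isvec m v}"
    using sums card_isvec[of m] by (intro card_subset_eq) (simp_all add: card_ge_0_finite)
  with assms obtain G where G: "G \<subseteq> Pow {1..m}" "v = vsum f G"
    by (metis (no_types, lifting) PowD imageE mem_Collect_eq)
  have "{T. T \<subseteq> {1..m} \<and> dot m v (g T)} = G"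
    using G dot_vsum_g[OF G(1)] by auto
  with G show ?thesis by simp
qed

lemma vspan_iff_orthogonal:
  assumes "F \<subseteq> Pow {1..m}"
  shows "v \<in> vspan (f ` F) \<longleftrightarrow> isvec m v \<and> (\<forall>T. T \<subseteq> {1..m} \<and> T \<notin> F \<longrightarrow> \<not> dot m v (g T))"
proof
  assume v: "v \<in> vspan (f ` F)"
  have "\<not> dot m v (g T)" if "T \<subseteq> {1..m}" "T \<notin> F" for T
    using v by (rule dot_vspan_left) (use assms that dot_f_g in blast)
  then show "isvec m v \<and> (\<forall>T. T \<subseteq> {1..m} \<and> T \<notin> F \<longrightarrow> \<not> dot m v (g T))"
    using isvec_vspan[OF v] isvec_f by blast
next
  assume v: "isvec m v \<and> (\<forall>T. T \<subseteq> {1..m} \<and> T \<notin> F \<longrightarrow> \<not> dot m v (g T))"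
  let ?G = "{T. T \<subseteq> {1..m} \<and> dot m v (g T)}"
  have "finite ?G" by (rule finite_subset_Pow_atLeastAtMost) blast
  moreover have "?G \<subseteq> F" using v by blast
  ultimately have "vsum f ?G \<in> vspan (f ` F)" by (rule vsum_in_vspan)
  moreover have "vsum f ?G = v" using v vsum_coefficients[of v] by simp
  ultimately show "v \<in> vspan (f ` F)" by simp
qed

lemma vspan_imp_vsum_subfamily:
  assumes "F \<subseteq> Pow {1..m}" "v \<in> vspan (f ` F)"
  obtains G where "G \<subseteq> F" "v = vsum f G"
proof
  show "{T. T \<subseteq> {1..m} \<and> dot m v (g T)} \<subseteq> F"
    using assms vspan_iff_orthogonal by blast
  show "v = vsum f {T. T \<subseteq> {1..m} \<and> dot m v (g T)}"
    by (rule vsum_coefficients) (use assms vspan_iff_orthogonal in blast)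
qed

lemma card_vspan:
  assumes "F \<subseteq> Pow {1..m}"
  shows "card (vspan (f ` F)) = 2 ^ card F"
proof -
  have "vspan (f ` F) = vsum f ` Pow F"
  proof (intro equalityI subsetI)
    fix v assume "v \<in> vspan (f ` F)"
    then obtain G where "G \<subseteq> F" "v = vsum f G"
      by (rule vspan_imp_vsum_subfamily[OF assms])
    then show "v \<in> vsum f ` Pow F" by blast
  next
    fix v assume "v \<in> vsum f ` Pow F"
    then show "v \<in> vspan (f ` F)"
      using assms finite_subset_Pow_atLeastAtMost[OF assms] by (auto intro!: vsum_in_vspan intro: finite_subset)
  qed
  moreover have "inj_on (vsum f) (Pow F)"
    by (rule inj_on_subset[OF inj_on_vsum]) (use assms in auto)
  ultimately show ?thesis
    using assms by (simp add: card_image card_Pow finite_subset_Pow_atLeastAtMost)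
qed

lemma vdim_vspan:
  assumes "F \<subseteq> Pow {1..m}"
  shows "vdim (vspan (f ` F)) = card F"
  unfolding vdim_def
proof (rule Least_equality)
  have "inj_on f F"
    using assms dot_f_g by (intro inj_onI) (metis PowD subsetD)
  then show "\<exists>B. finite B \<and> card B = card F \<and> B \<subseteq> vspan (f ` F) \<and> vspan B = vspan (f ` F)"
    using assms by (intro exI[of _ "f ` F"])
      (auto simp: card_image finite_subset_Pow_atLeastAtMost intro: vspan_base)
next
  fix d assume "\<exists>B. finite B \<and> card B = d \<and> B \<subseteq> vspan (f ` F) \<and> vspan B = vspan (f ` F)"
  then obtain B where "finite B" "card B = d" "vspan B = vspan (f ` F)" by blast
  then have "(2::nat) ^ card F \<le> 2 ^ d"
    using card_vspan_le[of B] card_vspan[OF assms] by simp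
  then show "card F \<le> d" by simp
qed

lemma vspan_Un_diff_obtain_vsum:
  assumes "F \<union> R \<subseteq> Pow {1..m}" "v \<in> vspan (f ` (F \<union> R))" "v \<notin> vspan (f ` F)"
  obtains G T0 where "G \<subseteq> F \<union> R" "v = vsum f G" "T0 \<in> G" "T0 \<in> R"
proof -
  obtain G where G: "G \<subseteq> F \<union> R" "v = vsum f G"
    using assms(1,2) by (rule vspan_imp_vsum_subfamily)
  have "\<not> G \<subseteq> F"
  proof
    assume "G \<subseteq> F"
    moreover have "finite G" using G(1) assms(1) by (blast intro: finite_subset_Pow_atLeastAtMost)
    ultimately have "v \<in> vspan (f ` F)" unfolding G(2) by (intro vsum_in_vspan)
    with assms(3) show False ..
  qed
  with G that show thesis by blast
qed

lemma kerM_eq_vspan: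
  assumes "F \<subseteq> Pow {1..m}" and "rs H = vspan (g ` F)"
  shows "kerM m H = vspan (f ` (Pow {1..m} - F))"
proof -
  have "(\<forall>h \<in> set H. \<not> dot m h v) \<longleftrightarrow> (\<forall>S \<in> F. \<not> dot m v (g S))" for v
  proof
    assume H: "\<forall>h \<in> set H. \<not> dot m h v"
    have "\<not> dot m u v" if "u \<in> rs H" for u
      using that unfolding rs_def by (rule dot_vspan_left) (use H in blast)
    moreover have "g S \<in> rs H" if "S \<in> F" for S
      using that assms(2) by (simp add: vspan_base)
    ultimately show "\<forall>S \<in> F. \<not> dot m v (g S)"
      by (metis dot_commute)
  next
    assume F: "\<forall>S \<in> F. \<not> dot m v (g S)"
    have "\<not> dot m u v" if "u \<in> vspan (g ` F)" for u
      using that by (rule dot_vspan_left) (use F in \<open>auto simp: dot_commute\<close>)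
    then show "\<forall>h \<in> set H. \<not> dot m h v"
      using assms(2) unfolding rs_def by (auto intro: vspan_base)
  qed
  then show ?thesis
    using assms(1) by (auto simp: kerM_def vspan_iff_orthogonal)
qed

end

interpretation ev_mono: dual_bases m "ev_mono m" "ev_hat m"
  by unfold_locales (simp_all add: dot_ev_mono_ev_hat)

interpretation ev_hat: dual_bases m "ev_hat m" "ev_mono m"
proof
  fix T S assume "T \<subseteq> {1..m}" "S \<subseteq> {1..m}"
  then show "dot m (ev_hat m T) (ev_mono m S) \<longleftrightarrow> T = S"
    using dot_ev_mono_ev_hat[of S m T] dot_commute by metis
qed simp

section \<open>Reed--Muller codes and weights\<close>

lemma RM_eq_vspan_ev_mono: "RM r m = vspan (ev_mono m ` {T. T \<subseteq> {1..m} \<and> int (card T) \<le> r})"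
  unfolding RM_def by (simp add: setcompr_eq_image)

text \<open>Since \<open>hat x\<^sub>S\<close> has degree \<open>m - |S|\<close>, the hats of degree at most \<open>r\<close> span \<open>RM(r,m)\<close>.\<close>
lemma RM_eq_vspan_ev_hat: "RM r m = vspan (ev_hat m ` {S. S \<subseteq> {1..m} \<and> int m \<le> int (card S) + r})"
proof -
  let ?T = "{T. T \<subseteq> {1..m} \<and> int (card T) \<le> r}" and ?S = "{S. S \<subseteq> {1..m} \<and> int m \<le> int (card S) + r}"
  have "vspan (ev_mono m ` ?T) \<subseteq> vspan (ev_hat m ` ?S)"
  proof (rule vspan_subset_vspan, rule image_subsetI)
    fix T assume T: "T \<in> ?T"
    have "\<not> dot m (ev_mono m T) (ev_mono m S)" if S: "S \<subseteq> {1..m}" "S \<notin> ?S" for S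
    proof -
      have "card (T \<union> S) < m" using card_Un_le[of T S] T S by auto
      then have "T \<union> S \<noteq> {1..m}" by auto
      then show ?thesis using T S by (simp add: dot_ev_mono_ev_mono)
    qed
    then show "ev_mono m T \<in> vspan (ev_hat m ` ?S)"
      by (subst ev_hat.vspan_iff_orthogonal) auto
  qed
  moreover have "vspan (ev_hat m ` ?S) \<subseteq> vspan (ev_mono m ` ?T)"
  proof (rule vspan_subset_vspan, rule image_subsetI)
    fix S assume S: "S \<in> ?S"
    have "\<not> dot m (ev_hat m S) (ev_hat m T)" if T: "T \<subseteq> {1..m}" "T \<notin> ?T" for T
    proof -
      have "card (S \<union> T) \<le> m"
        using S T card_mono[of "{1..m}" "S \<union> T"] by simp
      then have "card (S \<inter> T) > 0"
        using S T card_Un_Int[of S T] by (auto simp: finite_subset_atLeastAtMost)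
      then show ?thesis using S T by (auto simp: dot_ev_hat_ev_hat)
    qed
    then show "ev_hat m S \<in> vspan (ev_mono m ` ?T)"
      by (subst ev_mono.vspan_iff_orthogonal) auto
  qed
  ultimately show ?thesis by (simp add: RM_eq_vspan_ev_mono)
qed

lemma weight_ev_mono:
  assumes "T \<subseteq> {1..m}"
  shows "weight (ev_mono m T) = 2 ^ (m - card T)"
proof -
  have "{a. ev_mono m T a} = {a. T \<subseteq> a \<and> a \<subseteq> {1..m}}" by (auto simp: ev_mono_iff)
  then show ?thesis
    unfolding weight_def using card_subset_interval[of "{1..m}" T] assms
    by (simp add: card_Diff_subset finite_subset_atLeastAtMost)
qed

lemma weight_ev_hat:
  assumes "S \<subseteq> {1..m}"
  shows "weight (ev_hat m S) = 2 ^ card S"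
proof -
  have "{a. ev_hat m S a} = {a. {} \<subseteq> a \<and> a \<subseteq> S}" using assms by (simp add: ev_hat_iff)
  then show ?thesis
    unfolding weight_def using card_subset_interval[of S "{}"] assms by (simp add: finite_subset_atLeastAtMost)
qed

lemma weight_ge_if_Pow_subset_image:
  assumes "isvec m v" and "Pow C \<subseteq> h ` {a. v a}"
  shows "2 ^ card C \<le> weight v"
proof -
  have "{a. v a} \<subseteq> pts m" using assms(1) unfolding isvec_def by blast
  then have fin: "finite {a. v a}" by (rule finite_subset) simp
  then have "finite (Pow C)" using assms(2) finite_subset by blast
  then have "2 ^ card C = card (Pow C)" by (simp add: card_Pow)
  also have "\<dots> \<le> card (h ` {a. v a})" using assms(2) fin by (simp add: card_mono)
  also have "\<dots> \<le> weight v" unfolding weight_def using fin by (rule card_image_le)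
  finally show ?thesis .
qed

text \<open>On the cube of points between \<open>b\<close> and \<open>b \<union> T\<^sub>0\<close>, a monomial \<open>x\<^sub>T\<close> with
  \<open>T \<in> G - {T\<^sub>0}\<close> is independent of some coordinate in \<open>T\<^sub>0\<close> (as \<open>T\<^sub>0 \<subseteq> T\<close> is
  impossible by maximality), so it has even weight there; only \<open>x\<^sub>T\<^sub>0\<close> contributes.\<close>
lemma odd_card_vsum_ev_mono_on_cube:
  assumes G: "G \<subseteq> Pow {1..m}" and T0: "T0 \<in> G" and top: "\<forall>T\<in>G. card T \<le> card T0"
    and b: "b \<subseteq> {1..m} - T0"
  shows "odd (card {a \<in> {a. b \<subseteq> a \<and> a \<subseteq> b \<union> T0}. vsum (ev_mono m) G a})"
proof -
  let ?I = "{a. b \<subseteq> a \<and> a \<subseteq> b \<union> T0}"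
  have T0m: "T0 \<subseteq> {1..m}" using G T0 by auto
  have "b \<union> T0 \<subseteq> {1..m}" using b T0m by blast
  then have fin: "finite (b \<union> T0)" by (rule finite_subset_atLeastAtMost)
  have "vsum (ev_mono m) G a \<longleftrightarrow> odd (card {T \<in> G. T \<subseteq> a})" if "a \<in> ?I" for a
  proof -
    have "a \<subseteq> {1..m}" using that b T0m by auto
    then have "{T \<in> G. ev_mono m T a} = {T \<in> G. T \<subseteq> a}" by (auto simp: ev_mono_iff)
    then show ?thesis unfolding vsum_def by simp
  qed
  then have "{a \<in> ?I. vsum (ev_mono m) G a} = {a \<in> ?I. odd (card {T \<in> G. T \<subseteq> a})}"
    by blast
  then have "odd (card {a \<in> ?I. vsum (ev_mono m) G a}) \<longleftrightarrow> odd (card {a \<in> ?I. odd (card {T \<in> G. T \<subseteq> a})})"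
    by simp
  also have "\<dots> \<longleftrightarrow> odd (card {T \<in> G. odd (card {a \<in> ?I. T \<subseteq> a})})"
    using fin G by (intro odd_card_swap) (auto intro: finite_subset_Pow_atLeastAtMost finite_subset[of _ "Pow (b \<union> T0)"])
  also have "{T \<in> G. odd (card {a \<in> ?I. T \<subseteq> a})} = {T0}"
  proof -
    have "odd (card {a \<in> ?I. T \<subseteq> a}) \<longleftrightarrow> T = T0" if T: "T \<in> G" for T
    proof -
      have "{a \<in> ?I. T \<subseteq> a} = {a. b \<union> T \<subseteq> a \<and> a \<subseteq> b \<union> T0}" by auto
      then have "odd (card {a \<in> ?I. T \<subseteq> a}) \<longleftrightarrow> b \<union> T = b \<union> T0"
        using odd_card_subset_interval_iff[OF fin, of "b \<union> T"] by (simp only:)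
      also have "\<dots> \<longleftrightarrow> T = T0"
      proof
        assume "b \<union> T = b \<union> T0"
        then have "T0 \<subseteq> T" using b by blast
        moreover have "finite T" using T G by (auto intro: finite_subset_atLeastAtMost)
        ultimately show "T = T0" using top T by (metis card_seteq)
      qed simp
      finally show ?thesis .
    qed
    then show ?thesis using T0 by auto
  qed
  finally show ?thesis by simp
qed

lemma weight_vsum_ev_mono_ge:
  assumes G: "G \<subseteq> Pow {1..m}" and T0: "T0 \<in> G" and top: "\<forall>T\<in>G. card T \<le> card T0"
  shows "2 ^ (m - card T0) \<le> weight (vsum (ev_mono m) G)"
proof -
  let ?v = "vsum (ev_mono m) G"
  have T0m: "T0 \<subseteq> {1..m}" using G T0 by auto
  have "Pow ({1..m} - T0) \<subseteq> (\<lambda>a. a - T0) ` {a. ?v a}"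
  proof
    fix b assume "b \<in> Pow ({1..m} - T0)"
    then have "odd (card {a \<in> {a. b \<subseteq> a \<and> a \<subseteq> b \<union> T0}. ?v a})"
      using odd_card_vsum_ev_mono_on_cube[OF G T0 top] by blast
    then obtain a where "b \<subseteq> a" "a \<subseteq> b \<union> T0" "?v a"
      by (metis (no_types, lifting) empty_Collect_eq card.empty odd_card_imp_not_empty mem_Collect_eq)
    moreover have "a - T0 = b" using calculation \<open>b \<in> Pow ({1..m} - T0)\<close> by auto
    ultimately show "b \<in> (\<lambda>a. a - T0) ` {a. ?v a}" by blast
  qed
  moreover have "isvec m ?v"
    using G by (intro isvec_vspan[OF vsum_in_vspan]) (auto intro: finite_subset_Pow_atLeastAtMost)
  ultimately have "2 ^ card ({1..m} - T0) \<le> weight ?v"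
    by (intro weight_ge_if_Pow_subset_image)
  then show ?thesis using T0m by (simp add: card_Diff_subset finite_subset_atLeastAtMost)
qed

lemma weight_comp_involution:
  assumes "\<And>a. \<sigma> (\<sigma> a) = a"
  shows "weight (v \<circ> \<sigma>) = weight v"
proof -
  have "{a. v (\<sigma> a)} = \<sigma> ` {a. v a}" using assms by (auto intro: image_eqI[of _ \<sigma> "\<sigma> _"])
  moreover have "inj \<sigma>" by (metis assms injI)
  ultimately have "card {a. v (\<sigma> a)} = card {a. v a}" by (simp add: card_image inj_on_subset)
  then show ?thesis unfolding weight_def comp_def .
qed

text \<open>Complementing the points turns \<open>hat x\<^sub>S\<close> into the monomial indexed by \<open>{1..m} - S\<close>.\<close>
definition compl_pt :: "nat \<Rightarrow> nat set \<Rightarrow> nat set" where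
  "compl_pt m a = (if a \<in> pts m then {1..m} - a else a)"

lemma compl_pt_compl_pt: "compl_pt m (compl_pt m a) = a"
  unfolding compl_pt_def pts_def by auto

lemma ev_hat_eq_ev_mono_comp_compl_pt:
  "S \<subseteq> {1..m} \<Longrightarrow> ev_hat m S = ev_mono m ({1..m} - S) \<circ> compl_pt m"
  by (auto simp: fun_eq_iff compl_pt_def ev_hat_iff ev_mono_iff pts_def)

lemma weight_vsum_ev_hat_ge:
  assumes G: "G \<subseteq> Pow {1..m}" and S0: "S0 \<in> G" and bottom: "\<forall>S\<in>G. card S0 \<le> card S"
  shows "2 ^ card S0 \<le> weight (vsum (ev_hat m) G)"
proof -
  let ?c = "\<lambda>S. {1..m} - S"
  have card_c: "card (?c S) = m - card S" if "S \<in> G" for S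
    using that G by (auto simp: card_Diff_subset finite_subset_atLeastAtMost)
  have "inj_on ?c G" using G by (intro inj_onI) (metis Diff_Diff_Int PowD inf.absorb_iff2 subsetD)
  have "vsum (ev_hat m) G = vsum (\<lambda>S. (ev_mono m \<circ> ?c) S \<circ> compl_pt m) G"
    using G by (intro vsum_cong) (auto simp: ev_hat_eq_ev_mono_comp_compl_pt)
  also have "\<dots> = vsum (ev_mono m \<circ> ?c) G \<circ> compl_pt m"
    by (rule vsum_comp_right)
  also have "\<dots> = vsum (ev_mono m) (?c ` G) \<circ> compl_pt m"
    unfolding vsum_image[OF \<open>inj_on ?c G\<close>] ..
  finally have "weight (vsum (ev_hat m) G) = weight (vsum (ev_mono m) (?c ` G))"
    by (simp add: weight_comp_involution compl_pt_compl_pt)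
  moreover have "2 ^ (m - card (?c S0)) \<le> weight (vsum (ev_mono m) (?c ` G))"
  proof (rule weight_vsum_ev_mono_ge)
    show "\<forall>T\<in>?c ` G. card T \<le> card (?c S0)"
      using bottom S0 card_c by auto
  qed (use S0 in auto)
  moreover have "m - card (?c S0) = card S0"
    using S0 G card_c[OF S0] card_mono[of "{1..m}" S0] by auto
  ultimately show ?thesis by simp
qed

lemma min_weight_eqI: "w \<in> V \<Longrightarrow> (\<And>v. v \<in> V \<Longrightarrow> weight w \<le> weight v) \<Longrightarrow> min_weight V = weight w"
  unfolding min_weight_def by (rule cInf_eq_minimum) auto

section \<open>The index sets of the code\<close>

definition logical_set :: "nat \<Rightarrow> nat \<Rightarrow> nat set" where
  "logical_set l j = {1..l-1} \<union> {j}"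

definition logical_sets :: "nat \<Rightarrow> nat \<Rightarrow> nat set set" where
  "logical_sets l m = logical_set l ` {l..m}"

definition x_check_sets :: "nat \<Rightarrow> nat \<Rightarrow> nat set set" where
  "x_check_sets l m = {T. T \<subseteq> {1..m} \<and> card T < l}"

definition z_check_sets :: "nat \<Rightarrow> nat \<Rightarrow> nat set set" where
  "z_check_sets l m = {S. S \<subseteq> {1..m} \<and> l \<le> card S \<and> S \<notin> logical_sets l m}"

lemma x_check_sets_subset_Pow: "x_check_sets l m \<subseteq> Pow {1..m}"
  unfolding x_check_sets_def by auto

lemma z_check_sets_subset_Pow: "z_check_sets l m \<subseteq> Pow {1..m}"
  unfolding z_check_sets_def by auto

lemma card_logical_set: "1 \<le> l \<Longrightarrow> l \<le> j \<Longrightarrow> card (logical_set l j) = l"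
  unfolding logical_set_def by simp

lemma inj_on_logical_set: "inj_on (logical_set l) {l..}"
proof (rule inj_onI)
  fix x y assume "x \<in> {l..}" "logical_set l x = logical_set l y"
  then have "x \<in> logical_set l y" "l \<le> x" unfolding logical_set_def by auto
  then show "x = y" unfolding logical_set_def by auto
qed

lemma card_logical_sets: "l \<le> m \<Longrightarrow> card (logical_sets l m) = m - l + 1"
  unfolding logical_sets_def
  by (subst card_image[OF inj_on_subset[OF inj_on_logical_set]]) auto

lemma logical_sets_subset_Pow: "1 \<le> l \<Longrightarrow> logical_sets l m \<subseteq> Pow {1..m}"
  unfolding logical_sets_def logical_set_def by auto

lemma card_of_logical_sets: "1 \<le> l \<Longrightarrow> S \<in> logical_sets l m \<Longrightarrow> card S = l"
  unfolding logical_sets_def using card_logical_set by auto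

lemma Pow_diff_z_check_sets:
  "1 \<le> l \<Longrightarrow> Pow {1..m} - z_check_sets l m = x_check_sets l m \<union> logical_sets l m"
  using logical_sets_subset_Pow[of l m] card_of_logical_sets[of l _ m]
  unfolding x_check_sets_def z_check_sets_def by force

lemma Pow_diff_x_check_sets:
  "1 \<le> l \<Longrightarrow> Pow {1..m} - x_check_sets l m = z_check_sets l m \<union> logical_sets l m"
  using logical_sets_subset_Pow[of l m] card_of_logical_sets[of l _ m]
  unfolding x_check_sets_def z_check_sets_def by force

lemma card_check_sets:
  assumes "1 \<le> l" "l \<le> m"
  shows "card (x_check_sets l m) + card (z_check_sets l m) + (m - l + 1) = 2 ^ m"
proof -
  have fin: "finite (x_check_sets l m)" "finite (z_check_sets l m)" "finite (logical_sets l m)"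
    using logical_sets_subset_Pow[OF assms(1)]
    by (auto simp: x_check_sets_def z_check_sets_def intro: finite_subset_Pow_atLeastAtMost)
  have disj: "x_check_sets l m \<inter> (z_check_sets l m \<union> logical_sets l m) = {}"
    using Pow_diff_x_check_sets[OF assms(1), of m] by blast
  have "z_check_sets l m \<inter> logical_sets l m = {}"
    by (auto simp: z_check_sets_def)
  then have "card (z_check_sets l m \<union> logical_sets l m) = card (z_check_sets l m) + (m - l + 1)"
    using fin card_logical_sets[OF assms(2)] by (simp add: card_Un_disjoint)
  moreover have "x_check_sets l m \<union> (z_check_sets l m \<union> logical_sets l m) = Pow {1..m}"
    using Pow_diff_x_check_sets[OF assms(1), of m] by (auto simp: x_check_sets_def)
  ultimately show ?thesis
    using card_Un_disjoint[OF fin(1) _ disj] fin by (simp add: card_Pow add.assoc)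
qed

lemma RM_eq_vspan_x_check_sets: "RM (int l - 1) m = vspan (ev_mono m ` x_check_sets l m)"
  unfolding RM_eq_vspan_ev_mono x_check_sets_def by (rule arg_cong[where f = vspan]) force

lemma vspan_Z_generators_eq:
  assumes "1 \<le> l"
  shows "vspan (RM (int m - int l - 1) m \<union>
            {ev_hat m S | S. S \<subseteq> {1..m} \<and> card S = l \<and>
               S \<notin> {{1..l-1} \<union> {j} | j. j \<in> {l..m}}})
       = vspan (ev_hat m ` z_check_sets l m)"
proof -
  have "{ev_hat m S | S. S \<subseteq> {1..m} \<and> card S = l \<and> S \<notin> {{1..l-1} \<union> {j} | j. j \<in> {l..m}}}
      = ev_hat m ` {S. S \<subseteq> {1..m} \<and> card S = l \<and> S \<notin> logical_sets l m}"
    unfolding logical_sets_def logical_set_def by blast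
  moreover have "{S. S \<subseteq> {1..m} \<and> int m \<le> int (card S) + (int m - int l - 1)}
      \<union> {S. S \<subseteq> {1..m} \<and> card S = l \<and> S \<notin> logical_sets l m} = z_check_sets l m"
    using card_of_logical_sets[OF assms] by (auto simp: z_check_sets_def)
  ultimately show ?thesis
    unfolding RM_eq_vspan_ev_hat vspan_Un_vspan by (simp add: image_Un[symmetric])
qed

section \<open>Coordinate transvections\<close>

text \<open>The coordinate permutation induced by the affine map \<open>x\<^sub>p \<mapsto> x\<^sub>p + x\<^sub>q\<close> of \<open>\<bbbF>\<^sub>2\<^sup>m\<close>.\<close>
definition point_transvection :: "nat \<Rightarrow> nat \<Rightarrow> nat \<Rightarrow> nat set \<Rightarrow> nat set" where
  "point_transvection m p q a =
     (if a \<in> pts m \<and> q \<in> a then (if p \<in> a then a - {p} else insert p a) else a)"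

lemma point_transvection_involution:
  "p \<in> {1..m} \<Longrightarrow> p \<noteq> q \<Longrightarrow> point_transvection m p q (point_transvection m p q a) = a"
  unfolding point_transvection_def pts_def by auto

lemma point_transvection_permutes:
  assumes "p \<in> {1..m}" "p \<noteq> q"
  shows "point_transvection m p q permutes pts m"
proof (rule bij_imp_permutes)
  show "bij_betw (point_transvection m p q) (pts m) (pts m)"
    by (rule bij_betw_byWitness[where f' = "point_transvection m p q"])
      (use assms in \<open>auto simp: point_transvection_involution point_transvection_def pts_def\<close>)
qed (simp add: point_transvection_def)

lemma vperm_ev_mono_point_transvection:
  assumes "p \<in> {1..m}" "q \<in> {1..m}" "p \<noteq> q" "T \<subseteq> {1..m}"
  shows "vperm (point_transvection m p q) (ev_mono m T) =
    (if p \<in> T then vadd (ev_mono m T) (ev_mono m (insert q (T - {p}))) else ev_mono m T)"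
  using assms
  by (auto simp: fun_eq_iff vperm_def point_transvection_def vadd_def ev_mono_iff pts_def)

lemma vperm_ev_hat_point_transvection:
  assumes "p \<in> {1..m}" "q \<in> {1..m}" "p \<noteq> q" "S \<subseteq> {1..m}"
  shows "vperm (point_transvection m p q) (ev_hat m S) =
    (if p \<notin> S \<and> q \<in> S
     then vadd (ev_hat m S) (vadd (ev_hat m (insert p (S - {q}))) (ev_hat m (insert p S)))
     else ev_hat m S)"
  using assms
  by (auto simp: fun_eq_iff vperm_def point_transvection_def vadd_def ev_hat_def pts_def)

lemma vperm_vadd: "vperm \<sigma> (vadd u w) = vadd (vperm \<sigma> u) (vperm \<sigma> w)"
  unfolding vperm_def vadd_def by auto

lemma vperm_vzero: "vperm \<sigma> vzero = vzero"
  unfolding vperm_def vzero_def by auto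

lemma vperm_in_vspan:
  assumes "u \<in> vspan B" and "\<And>b. b \<in> B \<Longrightarrow> vperm \<sigma> b \<in> vspan B"
  shows "vperm \<sigma> u \<in> vspan B"
  using assms
  by (induction u rule: vspan.induct) (auto simp: vperm_vzero vperm_vadd intro: vspan.zero vspan_vadd)

lemma vperm_in_vspan_image: "u \<in> vspan B \<Longrightarrow> vperm \<sigma> u \<in> vspan (vperm \<sigma> ` B)"
  by (induction u rule: vspan.induct) (auto simp: vperm_vzero vperm_vadd intro: vspan.zero vspan.add)

lemma rs_map_vperm:
  assumes inv: "\<And>a. \<sigma> (\<sigma> a) = a" and closed: "\<And>b. b \<in> B \<Longrightarrow> vperm \<sigma> b \<in> vspan B"
    and rs: "rs H = vspan B"
  shows "rs (map (vperm \<sigma>) H) = rs H"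
proof -
  have sub: "vperm \<sigma> ` set H \<subseteq> rs H"
    using rs closed by (auto intro: vperm_in_vspan vspan_base simp: rs_def)
  have "h \<in> vspan (vperm \<sigma> ` set H)" if "h \<in> set H" for h
  proof -
    have "vperm \<sigma> h \<in> vspan (set H)" using sub that unfolding rs_def by blast
    then have "vperm \<sigma> (vperm \<sigma> h) \<in> vspan (vperm \<sigma> ` set H)" by (rule vperm_in_vspan_image)
    then show ?thesis using inv by (simp add: vperm_def o_def)
  qed
  then show ?thesis
    unfolding rs_def set_map using sub unfolding rs_def
    by (intro equalityI vspan_subset_vspan) auto
qed

lemma mmul_transvection:
  assumes "a < k" "b < k" "a \<noteq> b" "i < k"
  shows "mmul k (transvection a b) L i = (if i = a then vadd (L a) (L b) else L i)"
proof
  fix c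
  have rows: "{j \<in> {..<k}. transvection a b i j \<and> L j c}
      = (if i = a then {j. j = a \<and> L a c} \<union> {j. j = b \<and> L b c} else {j. j = i \<and> L i c})"
    using assms unfolding transvection_def by auto
  show "mmul k (transvection a b) L i c = (if i = a then vadd (L a) (L b) else L i) c"
    unfolding mmul_def vadd_def rows using assms(3)
    by (cases "L a c"; cases "L b c"; cases "L i c") auto
qed

text \<open>\<open>(I + E\<^sub>a\<^sub>b)\<^sup>-\<^sup>T = I + E\<^sub>b\<^sub>a\<close> over \<open>\<bbbF>\<^sub>2\<close>.\<close>
lemma transvection_times_transpose:
  assumes "a < k" "b < k" "a \<noteq> b" "i < k" "j < k"
  shows "odd (card {t \<in> {..<k}. transvection a b i t \<and> transvection b a j t}) \<longleftrightarrow> i = j"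
proof -
  have "{t \<in> {..<k}. transvection a b i t \<and> transvection b a j t}
      = (if i = a \<and> j = b then {a, b} else if i = j then {i} else {})"
    using assms unfolding transvection_def by auto
  then show ?thesis using assms by auto
qed

lemma logical_set_swap:
  "l \<le> p \<Longrightarrow> l \<le> q \<Longrightarrow> p \<noteq> q \<Longrightarrow> insert q (logical_set l p - {p}) = logical_set l q"
  unfolding logical_set_def by auto

lemma vperm_ev_mono_x_check_sets:
  assumes pq: "p \<in> {1..m}" "q \<in> {1..m}" "p \<noteq> q" and T: "T \<in> x_check_sets l m"
  shows "vperm (point_transvection m p q) (ev_mono m T) \<in> vspan (ev_mono m ` x_check_sets l m)"
proof -
  have Tm: "T \<subseteq> {1..m}" using T by (simp add: x_check_sets_def)
  have "insert q (T - {p}) \<in> x_check_sets l m" if "p \<in> T"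
  proof -
    have "finite T" using Tm by (rule finite_subset_atLeastAtMost)
    moreover have "0 < card T" using calculation that by (auto simp: card_gt_0_iff)
    ultimately have "card (insert q (T - {p})) \<le> card T"
      using that by (simp add: card_insert_if card_Diff_singleton)
    then show ?thesis using T pq(2) by (auto simp: x_check_sets_def)
  qed
  moreover have "ev_mono m T' \<in> vspan (ev_mono m ` x_check_sets l m)" if "T' \<in> x_check_sets l m" for T'
    using that by (intro vspan_base imageI)
  ultimately show ?thesis
    using T vperm_ev_mono_point_transvection[OF pq Tm] by (auto intro!: vspan_vadd)
qed

lemma vperm_ev_hat_z_check_sets:
  assumes l: "1 \<le> l" and pq: "p \<in> {l..m}" "q \<in> {l..m}" "p \<noteq> q" and S: "S \<in> z_check_sets l m"
  shows "vperm (point_transvection m p q) (ev_hat m S) \<in> vspan (ev_hat m ` z_check_sets l m)"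
proof (cases "p \<notin> S \<and> q \<in> S")
  case True
  have Sm: "S \<subseteq> {1..m}" and card_S: "l \<le> card S" and S_not: "S \<notin> logical_sets l m"
    using S by (simp_all add: z_check_sets_def)
  have fin: "finite S" using Sm by (rule finite_subset_atLeastAtMost)
  have pm: "p \<in> {1..m}" and qm: "q \<in> {1..m}" using pq l by auto
  have "card (insert p S) = card S + 1" using True fin by simp
  then have "insert p S \<in> z_check_sets l m"
    using Sm pm card_S card_of_logical_sets[OF l, of "insert p S" m] by (auto simp: z_check_sets_def)
  moreover have "insert p (S - {q}) \<in> z_check_sets l m"
  proof -
    have "0 < card S" using True fin by (auto simp: card_gt_0_iff)
    then have card_eq: "card (insert p (S - {q})) = card S"
      using True fin by (simp add: card_Diff_singleton)
    have "insert p (S - {q}) \<notin> logical_sets l m"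
    proof
      assume "insert p (S - {q}) \<in> logical_sets l m"
      then obtain j where j: "insert p (S - {q}) = logical_set l j"
        by (auto simp: logical_sets_def)
      then have "p \<in> logical_set l j" by blast
      then have "p = j" using pq(1) unfolding logical_set_def by auto
      have "S - {q} = insert p (S - {q}) - {p}" using True by auto
      also have "\<dots> = logical_set l p - {p}" using j \<open>p = j\<close> by simp
      also have "\<dots> = {1..l-1}" using pq(1) unfolding logical_set_def by auto
      finally have "S - {q} = {1..l-1}" .
      then have "S = logical_set l q" using True unfolding logical_set_def by auto
      with S_not pq(2) show False by (simp add: logical_sets_def)
    qed
    then show ?thesis using card_eq card_S Sm pm by (auto simp: z_check_sets_def)
  qed
  moreover have "ev_hat m S' \<in> vspan (ev_hat m ` z_check_sets l m)" if "S' \<in> z_check_sets l m" for S'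
    using that by (intro vspan_base imageI)
  ultimately show ?thesis
    using True S vperm_ev_hat_point_transvection[OF pm qm pq(3) Sm] by (auto intro!: vspan_vadd)
next
  case False
  have "S \<subseteq> {1..m}" using S by (simp add: z_check_sets_def)
  then show ?thesis
    using False S pq l vperm_ev_hat_point_transvection[of p m q S] by (auto intro: vspan_base)
qed

section \<open>The code\<close>

locale rm_phantom_code =
  fixes m l :: nat and HX HZ :: "vec list"
  assumes l_pos: "1 \<le> l" and l_le_m: "l \<le> m"
    and rs_HX: "rs HX = vspan (ev_mono m ` x_check_sets l m)"
    and rs_HZ: "rs HZ = vspan (ev_hat m ` z_check_sets l m)"
begin

lemma kerM_HZ: "kerM m HZ = vspan (ev_mono m ` (x_check_sets l m \<union> logical_sets l m))"
  using ev_mono.kerM_eq_vspan[OF z_check_sets_subset_Pow rs_HZ] unfolding Pow_diff_z_check_sets[OF l_pos] .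

lemma kerM_HX: "kerM m HX = vspan (ev_hat m ` (z_check_sets l m \<union> logical_sets l m))"
  using ev_hat.kerM_eq_vspan[OF x_check_sets_subset_Pow rs_HX] unfolding Pow_diff_x_check_sets[OF l_pos] .

lemma orth: "orth m HX HZ"
proof -
  have "set HX \<subseteq> kerM m HZ"
    using vspan_mono[of "ev_mono m ` x_check_sets l m" "ev_mono m ` (x_check_sets l m \<union> logical_sets l m)"]
    unfolding kerM_HZ by (auto simp: rs_HX[symmetric] rs_def intro: vspan_base)
  then show ?thesis unfolding orth_def kerM_def by (auto simp: dot_commute)
qed

lemma css_k_eq: "css_k m HX HZ = int (m - l + 1)"
proof -
  have "rank HX = card (x_check_sets l m)" "rank HZ = card (z_check_sets l m)"
    unfolding rank_def rs_HX rs_HZ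
    by (rule ev_mono.vdim_vspan[OF x_check_sets_subset_Pow], rule ev_hat.vdim_vspan[OF z_check_sets_subset_Pow])
  then show ?thesis
    unfolding css_k_def using card_check_sets[OF l_pos l_le_m] by linarith
qed

lemma logical_set_in_logical_sets: "i < m - l + 1 \<Longrightarrow> logical_set l (l + i) \<in> logical_sets l m"
  unfolding logical_sets_def using l_le_m by auto

lemma logical_set_subset: "i < m - l + 1 \<Longrightarrow> logical_set l (l + i) \<subseteq> {1..m}"
  using logical_set_in_logical_sets logical_sets_subset_Pow[OF l_pos] by blast

lemma logical_basis:
  "logical_basis m HX HZ (m - l + 1)
     (\<lambda>i. ev_mono m (logical_set l (l + i))) (\<lambda>i. ev_hat m (logical_set l (l + i)))"
  unfolding logical_basis_def
proof (intro conjI allI impI)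
  fix i assume "i < m - l + 1"
  then have "logical_set l (l + i) \<in> logical_sets l m" by (rule logical_set_in_logical_sets)
  then show "ev_mono m (logical_set l (l + i)) \<in> kerM m HZ" "ev_hat m (logical_set l (l + i)) \<in> kerM m HX"
    unfolding kerM_HZ kerM_HX by (auto intro!: vspan_base)
next
  fix i j assume "i < m - l + 1" "j < m - l + 1"
  then have "logical_set l (l + i) \<subseteq> {1..m}" "logical_set l (l + j) \<subseteq> {1..m}"
    by (simp_all only: logical_set_subset)
  then have "dot m (ev_mono m (logical_set l (l + i))) (ev_hat m (logical_set l (l + j)))
      \<longleftrightarrow> logical_set l (l + i) = logical_set l (l + j)"
    by (rule dot_ev_mono_ev_hat)
  also have "\<dots> \<longleftrightarrow> i = j"
    using inj_on_logical_set[of l] by (auto dest: inj_onD)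
  finally show "dot m (ev_mono m (logical_set l (l + i))) (ev_hat m (logical_set l (l + j))) \<longleftrightarrow> i = j" .
qed

lemma logical_set_l:
  "logical_set l l \<in> logical_sets l m" "logical_set l l \<subseteq> {1..m}" "card (logical_set l l) = l"
  using logical_set_in_logical_sets[of 0] logical_sets_subset_Pow[OF l_pos] card_logical_set[OF l_pos]
  by auto

lemma X_logical_weight_ge:
  assumes "v \<in> kerM m HZ - rs HX"
  shows "2 ^ (m - l) \<le> weight v"
proof -
  have sets: "x_check_sets l m \<union> logical_sets l m \<subseteq> Pow {1..m}"
    using x_check_sets_subset_Pow logical_sets_subset_Pow[OF l_pos] by blast
  obtain G T0 where G: "G \<subseteq> x_check_sets l m \<union> logical_sets l m" "v = vsum (ev_mono m) G"
    and T0: "T0 \<in> G" "T0 \<in> logical_sets l m"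
    by (rule ev_mono.vspan_Un_diff_obtain_vsum[OF sets]) (use assms in \<open>auto simp: kerM_HZ rs_HX\<close>)
  have "card T \<le> card T0" if "T \<in> G" for T
    using that G(1) T0(2) card_of_logical_sets[OF l_pos] by (auto simp: x_check_sets_def)
  moreover have "G \<subseteq> Pow {1..m}" using G(1) sets by blast
  ultimately have "2 ^ (m - card T0) \<le> weight v"
    unfolding G(2) using T0(1) by (intro weight_vsum_ev_mono_ge) auto
  then show ?thesis using T0(2) by (simp add: card_of_logical_sets[OF l_pos])
qed

lemma Z_logical_weight_ge:
  assumes "v \<in> kerM m HX - rs HZ"
  shows "2 ^ l \<le> weight v"
proof -
  have sets: "z_check_sets l m \<union> logical_sets l m \<subseteq> Pow {1..m}"
    using z_check_sets_subset_Pow logical_sets_subset_Pow[OF l_pos] by blast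
  obtain G S0 where G: "G \<subseteq> z_check_sets l m \<union> logical_sets l m" "v = vsum (ev_hat m) G"
    and S0: "S0 \<in> G" "S0 \<in> logical_sets l m"
    by (rule ev_hat.vspan_Un_diff_obtain_vsum[OF sets]) (use assms in \<open>auto simp: kerM_HX rs_HZ\<close>)
  have "card S0 \<le> card S" if "S \<in> G" for S
    using that G(1) S0(2) card_of_logical_sets[OF l_pos] by (auto simp: z_check_sets_def)
  moreover have "G \<subseteq> Pow {1..m}" using G(1) sets by blast
  ultimately have "2 ^ card S0 \<le> weight v"
    unfolding G(2) using S0(1) by (intro weight_vsum_ev_hat_ge) auto
  then show ?thesis using S0(2) by (simp add: card_of_logical_sets[OF l_pos])
qed

lemma css_dX_eq: "css_dX m HX HZ = 2 ^ (m - l)"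
proof -
  let ?w = "ev_mono m (logical_set l l)"
  have "?w \<in> kerM m HZ - rs HX"
  proof
    show "?w \<in> kerM m HZ" unfolding kerM_HZ using logical_set_l by (auto intro!: vspan_base)
    have "logical_set l l \<notin> x_check_sets l m" using logical_set_l by (simp add: x_check_sets_def)
    then show "?w \<notin> rs HX"
      unfolding rs_HX ev_mono.vspan_iff_orthogonal[OF x_check_sets_subset_Pow]
      using logical_set_l by (auto simp: dot_ev_mono_ev_hat)
  qed
  moreover have "weight ?w = 2 ^ (m - l)"
    using logical_set_l by (simp add: weight_ev_mono)
  ultimately show ?thesis
    unfolding css_dX_def using X_logical_weight_ge by (metis min_weight_eqI)
qed

lemma css_dZ_eq: "css_dZ m HX HZ = 2 ^ l"
proof -
  let ?w = "ev_hat m (logical_set l l)"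
  have "?w \<in> kerM m HX - rs HZ"
  proof
    show "?w \<in> kerM m HX" unfolding kerM_HX using logical_set_l by (auto intro!: vspan_base)
    have "logical_set l l \<notin> z_check_sets l m" using logical_set_l by (simp add: z_check_sets_def)
    then show "?w \<notin> rs HZ"
      unfolding rs_HZ ev_hat.vspan_iff_orthogonal[OF z_check_sets_subset_Pow]
      using logical_set_l dot_ev_mono_ev_hat dot_commute by metis
  qed
  moreover have "weight ?w = 2 ^ l"
    using logical_set_l by (simp add: weight_ev_hat)
  ultimately show ?thesis
    unfolding css_dZ_def using Z_logical_weight_ge by (metis min_weight_eqI)
qed

lemma vperm_logical_X:
  assumes a: "a < m - l + 1" and b: "b < m - l + 1" and ab: "a \<noteq> b" and i: "i < m - l + 1"
  shows "vperm (point_transvection m (l + a) (l + b)) (ev_mono m (logical_set l (l + i)))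
    = mmul (m - l + 1) (transvection a b) (\<lambda>i. ev_mono m (logical_set l (l + i))) i"
proof -
  have "l + a \<in> {1..m}" "l + b \<in> {1..m}" using a b l_pos l_le_m by auto
  then show ?thesis
    using vperm_ev_mono_point_transvection[OF _ _ _ logical_set_subset[OF i]] mmul_transvection[OF a b ab i]
      logical_set_swap[of l "l + a" "l + b"] ab
    by (auto simp: logical_set_def)
qed

text \<open>The image of \<open>hat x\<close> on \<open>S\<^sub>q\<close> is not exactly \<open>hat x\<close> on \<open>S\<^sub>q\<close> plus
  \<open>hat x\<close> on \<open>S\<^sub>p\<close>: it also picks up the stabiliser generator indexed by \<open>S\<^sub>q \<union> {p}\<close>.\<close>
lemma vperm_logical_Z:
  assumes a: "a < m - l + 1" and b: "b < m - l + 1" and ab: "a \<noteq> b" and i: "i < m - l + 1"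
  shows "vadd (vperm (point_transvection m (l + a) (l + b)) (ev_hat m (logical_set l (l + i))))
    (mmul (m - l + 1) (transvection b a) (\<lambda>i. ev_hat m (logical_set l (l + i))) i) \<in> rs HZ"
proof -
  let ?p = "l + a" and ?q = "l + b"
  have pm: "?p \<in> {1..m}" and qm: "?q \<in> {1..m}" and pq: "?p \<noteq> ?q" using a b ab l_pos by auto
  show ?thesis
  proof (cases "i = b")
    case True
    let ?S = "insert ?p (logical_set l ?q)"
    have "card ?S = l + 1" "?S \<subseteq> {1..m}"
      using ab logical_set_subset[OF b] pm card_logical_set[OF l_pos, of ?q]
      by (auto simp: logical_set_def)
    then have "?S \<in> z_check_sets l m"
      using card_of_logical_sets[OF l_pos] by (force simp: z_check_sets_def)
    moreover have "vadd (vperm (point_transvection m ?p ?q) (ev_hat m (logical_set l (l + i))))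
        (mmul (m - l + 1) (transvection b a) (\<lambda>i. ev_hat m (logical_set l (l + i))) i) = ev_hat m ?S"
      using vperm_ev_hat_point_transvection[OF pm qm pq logical_set_subset[OF b]]
        mmul_transvection[OF b a ab[symmetric] i] logical_set_swap[of l ?q ?p] True ab
      by (auto simp: logical_set_def vadd_def fun_eq_iff)
    ultimately show ?thesis unfolding rs_HZ by (auto intro: vspan_base)
  next
    case False
    then have "vperm (point_transvection m ?p ?q) (ev_hat m (logical_set l (l + i)))
        = mmul (m - l + 1) (transvection b a) (\<lambda>i. ev_hat m (logical_set l (l + i))) i"
      using vperm_ev_hat_point_transvection[OF pm qm pq logical_set_subset[OF i]]
        mmul_transvection[OF b a ab[symmetric] i]
      by (auto simp: logical_set_def)
    then show ?thesis by (simp add: rs_def vspan.zero)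
  qed
qed

lemma implements_transvection:
  assumes a: "a < m - l + 1" and b: "b < m - l + 1" and ab: "a \<noteq> b"
  shows "implements m HX HZ (m - l + 1)
      (\<lambda>i. ev_mono m (logical_set l (l + i))) (\<lambda>i. ev_hat m (logical_set l (l + i)))
      (point_transvection m (l + a) (l + b)) (transvection a b)"
  unfolding implements_def
proof (intro conjI exI[of _ "transvection b a"] allI impI)
  let ?\<sigma> = "point_transvection m (l + a) (l + b)"
  have p: "l + a \<in> {l..m}" and q: "l + b \<in> {l..m}" and pq: "l + a \<noteq> l + b" using a b ab by auto
  then have pm: "l + a \<in> {1..m}" and qm: "l + b \<in> {1..m}" using l_pos by auto
  have inv: "?\<sigma> (?\<sigma> c) = c" for c
    using pm pq by (rule point_transvection_involution)
  show "?\<sigma> permutes pts m" using pm pq by (rule point_transvection_permutes)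
  show "rs (map (vperm ?\<sigma>) HX) = rs HX"
    by (rule rs_map_vperm[OF inv _ rs_HX]) (auto intro: vperm_ev_mono_x_check_sets[OF pm qm pq])
  show "rs (map (vperm ?\<sigma>) HZ) = rs HZ"
    by (rule rs_map_vperm[OF inv _ rs_HZ]) (auto intro: vperm_ev_hat_z_check_sets[OF l_pos p q pq])
  fix i assume i: "i < m - l + 1"
  show "vadd (vperm ?\<sigma> (ev_mono m (logical_set l (l + i))))
      (mmul (m - l + 1) (transvection a b) (\<lambda>i. ev_mono m (logical_set l (l + i))) i) \<in> rs HX"
    using vperm_logical_X[OF a b ab i] by (simp add: rs_def vspan.zero)
  show "vadd (vperm ?\<sigma> (ev_hat m (logical_set l (l + i))))
      (mmul (m - l + 1) (transvection b a) (\<lambda>i. ev_hat m (logical_set l (l + i))) i) \<in> rs HZ"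
    using a b ab i by (rule vperm_logical_Z)
  fix j assume "j < m - l + 1"
  with a b ab i show "odd (card {t \<in> {..<m - l + 1}. transvection a b i t \<and> transvection b a j t}) \<longleftrightarrow> i = j"
    by (rule transvection_times_transpose)
qed

lemma phantom: "phantom m HX HZ"
  unfolding phantom_def css_k_eq nat_int
  using logical_basis implements_transvection by blast

end

theorem mainTheorem12:
  fixes m l :: nat and HX HZ :: "vec list"
  assumes "m \<ge> 1" and "1 \<le> l" and "l \<le> m"
    and "rs HX = RM (int l - 1) m"
    and "rs HZ = vspan (RM (int m - int l - 1) m \<union>
            {ev_hat m S | S. S \<subseteq> {1..m} \<and> card S = l \<and>
               S \<notin> {{1..l-1} \<union> {j} | j. j \<in> {l..m}}})"
  shows "orth m HX HZ
    \<and> css_k m HX HZ = int (m - l + 1)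
    \<and> css_d m HX HZ = min (2^(m-l)) (2^l)
    \<and> phantom m HX HZ
    \<and> logical_basis m HX HZ (m - l + 1)
        (\<lambda>i. ev_mono m ({1..l-1} \<union> {l + i})) (\<lambda>i. ev_hat m ({1..l-1} \<union> {l + i}))"
proof -
  have "rs HX = vspan (ev_mono m ` x_check_sets l m)"
    using assms(4) unfolding RM_eq_vspan_x_check_sets .
  moreover have "rs HZ = vspan (ev_hat m ` z_check_sets l m)"
    using assms(5) unfolding vspan_Z_generators_eq[OF assms(2)] .
  ultimately interpret rm_phantom_code m l HX HZ
    using assms(2,3) by unfold_locales
  show ?thesis
    using orth css_k_eq css_dX_eq css_dZ_eq phantom logical_basis
    unfolding css_d_def logical_set_def by simp
qed

end
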